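(* Let $\delta\le1/4$ and let $\mathcal{I}$ be a $\delta$-ONI instance with $n$ agents. Then for every agent $i\in N^2(\mathcal{I})$, $v_i(2n+1)<\frac1{12}+\delta$.
   Context: Instance with agents $[n]$, goods $[m]$ ($m\ge2n$), additive valuations; goods with index larger than $m$ are dummy goods of value $0$. Ordered: $v_i(1)\ge\dots\ge v_i(m)$ for all $i$. Normalized: every agent $i$ has a partition of the goods into $n$ bundles each of value exactly $1$ to $i$ (an MMS partition). $\alpha$-irreducible: for every agent $i$, $v_i(1)<\alpha$, $v_i(\{2n-1,2n,2n+1\})<\alpha$, $v_i(\{3n-2,\dots,3n+1\})<\alpha$, $v_i(\{1,2n+1\})<\alpha$. $\delta$-ONI: ordered, normalized, $(3/4+\delta)$-irreducible. $B_k=\{k,2n-k+1\}$ for $k\in[n]$; $N^2(\mathcal{I})=\{i\in[n]:\exists k\in[n],\ v_i(B_k)>1\}$. *)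

theory Defs
  imports Complex_Main
begin

text \<open>Agents are 1..n, goods are 1..m. The valuation of agent i for good g is v i g.
  Goods outside 1..m (in particular indices larger than m) are dummy goods of value 0.\<close>

definition gval :: "nat \<Rightarrow> (nat \<Rightarrow> nat \<Rightarrow> real) \<Rightarrow> nat \<Rightarrow> nat \<Rightarrow> real" where
  "gval m v i g = (if 1 \<le> g \<and> g \<le> m then v i g else 0)"

definition bval :: "nat \<Rightarrow> (nat \<Rightarrow> nat \<Rightarrow> real) \<Rightarrow> nat \<Rightarrow> nat set \<Rightarrow> real" where
  "bval m v i S = (\<Sum>g\<in>S. gval m v i g)"

definition add_instance :: "nat \<Rightarrow> nat \<Rightarrow> (nat \<Rightarrow> nat \<Rightarrow> real) \<Rightarrow> bool" where
  "add_instance n m v \<longleftrightarrow> 1 \<le> n \<and> 2 * n \<le> m \<and>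
     (\<forall>i\<in>{1..n}. \<forall>g\<in>{1..m}. 0 \<le> v i g)"

definition ordered :: "nat \<Rightarrow> nat \<Rightarrow> (nat \<Rightarrow> nat \<Rightarrow> real) \<Rightarrow> bool" where
  "ordered n m v \<longleftrightarrow>
     (\<forall>i\<in>{1..n}. \<forall>g. 1 \<le> g \<and> g < m \<longrightarrow> v i (Suc g) \<le> v i g)"

definition normalized :: "nat \<Rightarrow> nat \<Rightarrow> (nat \<Rightarrow> nat \<Rightarrow> real) \<Rightarrow> bool" where
  "normalized n m v \<longleftrightarrow>
     (\<forall>i\<in>{1..n}. \<exists>P :: nat \<Rightarrow> nat set.
        (\<Union>k\<in>{1..n}. P k) = {1..m} \<and>
        (\<forall>k\<in>{1..n}. \<forall>l\<in>{1..n}. k \<noteq> l \<longrightarrow> P k \<inter> P l = {}) \<and>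
        (\<forall>k\<in>{1..n}. bval m v i (P k) = 1))"

definition irreducible :: "real \<Rightarrow> nat \<Rightarrow> nat \<Rightarrow> (nat \<Rightarrow> nat \<Rightarrow> real) \<Rightarrow> bool" where
  "irreducible \<alpha> n m v \<longleftrightarrow>
     (\<forall>i\<in>{1..n}.
        gval m v i 1 < \<alpha> \<and>
        bval m v i {2*n-1, 2*n, 2*n+1} < \<alpha> \<and>
        bval m v i {3*n-2..3*n+1} < \<alpha> \<and>
        bval m v i {1, 2*n+1} < \<alpha>)"

definition ONI :: "real \<Rightarrow> nat \<Rightarrow> nat \<Rightarrow> (nat \<Rightarrow> nat \<Rightarrow> real) \<Rightarrow> bool" where
  "ONI \<delta> n m v \<longleftrightarrow> ordered n m v \<and> normalized n m v \<and> irreducible (3/4 + \<delta>) n m v"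

definition B :: "nat \<Rightarrow> nat \<Rightarrow> nat set" where
  "B n k = {k, 2*n - k + 1}"

definition N2 :: "nat \<Rightarrow> nat \<Rightarrow> (nat \<Rightarrow> nat \<Rightarrow> real) \<Rightarrow> nat set" where
  "N2 n m v = {i\<in>{1..n}. \<exists>k\<in>{1..n}. bval m v i (B n k) > 1}"

end

theory Submission
  imports Defs
begin

text \<open>Suppose \<open>v\<^sub>i(2n+1) \<ge> 1/12 + \<delta>\<close> and \<open>v\<^sub>i(B\<^sub>k) > 1\<close> with \<open>t = 2n - k + 1\<close>.
  Irreducibility gives \<open>v\<^sub>i(k) \<le> v\<^sub>i(1) < 3/4 + \<delta> - v\<^sub>i(2n+1) \<le> 2/3\<close>, hence \<open>v\<^sub>i(t) > 1/3\<close>.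
  In a bundle of value 1 of an MMS partition of agent \<open>i\<close>, the goods \<open>1..t\<close> are worth more
  than \<open>1/3\<close> each and a good among \<open>1..k\<close> together with one among \<open>1..t\<close> is worth more
  than 1; so every bundle meets \<open>{1..t}\<close> and \<open>{1..k}\<close> in at most two goods altogether.
  Summing over the \<open>n\<close> bundles gives \<open>2n + 1 = t + k \<le> 2n\<close>.\<close>

lemma gval_nonneg:
  assumes "add_instance n m v" and "i \<in> {1..n}"
  shows "0 \<le> gval m v i g"
  using assms by (auto simp: add_instance_def gval_def)

lemma gval_antimono:
  assumes inst: "add_instance n m v" and ord: "ordered n m v" and i: "i \<in> {1..n}"
    and "1 \<le> g" and "g \<le> h"
  shows "gval m v i h \<le> gval m v i g"
  using \<open>g \<le> h\<close>
proof (induction h rule: dec_induct)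
  case base
  show ?case by simp
next
  case (step h)
  have "gval m v i (Suc h) \<le> gval m v i h"
  proof (cases "Suc h \<le> m")
    case True
    then show ?thesis
      using ord i \<open>1 \<le> g\<close> \<open>g \<le> h\<close> by (auto simp: ordered_def gval_def)
  next
    case False
    then show ?thesis
      using gval_nonneg[OF inst i, of h] by (simp add: gval_def)
  qed
  with step.IH show ?case by simp
qed

lemma sum_card_Int_partition:
  assumes "finite I" and "\<forall>b\<in>I. finite (P b)"
    and "\<forall>b\<in>I. \<forall>c\<in>I. b \<noteq> c \<longrightarrow> P b \<inter> P c = {}"
    and "X \<subseteq> (\<Union>b\<in>I. P b)"
  shows "(\<Sum>b\<in>I. card (P b \<inter> X)) = card X"
proof -
  have "(\<Union>b\<in>I. P b \<inter> X) = X" using assms(4) by blast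
  moreover have "card (\<Union>b\<in>I. P b \<inter> X) = (\<Sum>b\<in>I. card (P b \<inter> X))"
    by (rule card_UN_disjoint) (use assms(1-3) in auto)
  ultimately show ?thesis by simp
qed

lemma card_add_le_partition_bound:
  assumes "finite I" and "\<forall>b\<in>I. finite (P b)"
    and "\<forall>b\<in>I. \<forall>c\<in>I. b \<noteq> c \<longrightarrow> P b \<inter> P c = {}"
    and "X \<subseteq> (\<Union>b\<in>I. P b)" and "Y \<subseteq> (\<Union>b\<in>I. P b)"
    and bound: "\<And>b. b \<in> I \<Longrightarrow> card (P b \<inter> X) + card (P b \<inter> Y) \<le> c"
  shows "card X + card Y \<le> c * card I"
proof -
  have "card X + card Y = (\<Sum>b\<in>I. card (P b \<inter> X) + card (P b \<inter> Y))"
    using sum_card_Int_partition[OF assms(1-3)] assms(4,5) by (simp add: sum.distrib)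
  also have "\<dots> \<le> (\<Sum>b\<in>I. c)" by (rule sum_mono) (rule bound)
  finally show ?thesis by (simp add: mult.commute)
qed

lemma card_Int_atLeastAtMost_le_two:
  fixes f :: "nat \<Rightarrow> real"
  assumes nonneg: "\<And>g. 0 \<le> f g" and "finite A" and "sum f A \<le> 1"
    and antimono: "\<And>g. 1 \<le> g \<Longrightarrow> g \<le> t \<Longrightarrow> f t \<le> f g" and "3 * f t > 1"
  shows "card (A \<inter> {1..t}) \<le> 2"
proof -
  have "real (card (A \<inter> {1..t})) * f t \<le> sum f (A \<inter> {1..t})"
    by (rule sum_bounded_below) (use antimono in auto)
  also have "\<dots> \<le> sum f A"
    by (rule sum_mono2) (use assms(2) nonneg in auto)
  finally have "real (card (A \<inter> {1..t})) * f t < 3 * f t"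
    using assms(3,5) by linarith
  then have "real (card (A \<inter> {1..t})) < 3"
    using nonneg[of t] by (simp add: mult_less_cancel_right)
  then show ?thesis by linarith
qed

lemma card_Int_atLeastAtMost_le_one:
  fixes f :: "nat \<Rightarrow> real"
  assumes nonneg: "\<And>g. 0 \<le> f g" and "finite A" and "sum f A \<le> 1"
    and antimono: "\<And>g h. 1 \<le> g \<Longrightarrow> g \<le> h \<Longrightarrow> f h \<le> f g"
    and "k \<le> t" and big: "f k + f t > 1" and a: "a \<in> A \<inter> {1..k}"
  shows "card (A \<inter> {1..t}) \<le> 1"
proof -
  let ?R = "A \<inter> {1..t} - {a}"
  have a_t: "a \<in> A \<inter> {1..t}" using a \<open>k \<le> t\<close> by auto
  have "real (card ?R) * f t \<le> sum f ?R"
    by (rule sum_bounded_below) (use antimono in auto)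
  also have "f a + sum f ?R = sum f (A \<inter> {1..t})"
    using a_t \<open>finite A\<close> by (simp add: sum.remove)
  also have "\<dots> \<le> sum f A"
    by (rule sum_mono2) (use assms(2) nonneg in auto)
  moreover have "f k \<le> f a" using antimono a by auto
  ultimately have "real (card ?R) * f t < f t"
    using assms(3) big by linarith
  then have "real (card ?R) < 1"
    using nonneg[of t] by (simp add: mult_less_cancel_right2)
  then have "?R = {}"
    using \<open>finite A\<close> by simp
  then have "A \<inter> {1..t} = {a}" using a_t by blast
  then show ?thesis by simp
qed

lemma bundle_card_le_two:
  fixes f :: "nat \<Rightarrow> real"
  assumes nonneg: "\<And>g. 0 \<le> f g" and "finite A" and "sum f A \<le> 1"
    and antimono: "\<And>g h. 1 \<le> g \<Longrightarrow> g \<le> h \<Longrightarrow> f h \<le> f g"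
    and "1 \<le> k" and "k \<le> t" and "f k + f t > 1" and "3 * f t > 1"
  shows "card (A \<inter> {1..t}) + card (A \<inter> {1..k}) \<le> 2"
proof (cases "A \<inter> {1..k} = {}")
  case True
  have "card (A \<inter> {1..t}) \<le> 2"
    by (rule card_Int_atLeastAtMost_le_two) (use assms in auto)
  with True show ?thesis by simp
next
  case False
  then obtain a where a: "a \<in> A \<inter> {1..k}" by blast
  have t: "card (A \<inter> {1..t}) \<le> 1"
    by (rule card_Int_atLeastAtMost_le_one[OF assms(1-4,6,7) a])
  have "card (A \<inter> {1..k}) \<le> card (A \<inter> {1..t})"
    by (rule card_mono) (use \<open>finite A\<close> \<open>k \<le> t\<close> in auto)
  with t show ?thesis by simp
qed

lemma ONI_value_gt_third:
  assumes "ONI \<delta> n m v" and "add_instance n m v" and i: "i \<in> {1..n}"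
    and "k \<in> {1..n}" and "gval m v i k + gval m v i t > 1"
    and "gval m v i (2*n+1) \<ge> 1/12 + \<delta>"
  shows "3 * gval m v i t > 1"
proof -
  have "gval m v i 1 + gval m v i (2*n+1) < 3/4 + \<delta>"
    using assms(1) i by (simp add: ONI_def irreducible_def bval_def)
  moreover have "gval m v i k \<le> gval m v i 1"
    using gval_antimono[OF assms(2) _ i] assms(1,4) by (simp add: ONI_def)
  ultimately show ?thesis using assms(5,6) by linarith
qed

theorem mainTheorem14:
  fixes \<delta> :: real and n m :: nat and v :: "nat \<Rightarrow> nat \<Rightarrow> real"
  assumes "\<delta> \<le> 1/4"
    and "add_instance n m v"
    and "ONI \<delta> n m v"
    and "i \<in> N2 n m v"
  shows "gval m v i (2*n+1) < 1/12 + \<delta>"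
proof (rule ccontr)
  assume large: "\<not> ?thesis"
  have i: "i \<in> {1..n}" using assms(4) by (simp add: N2_def)
  obtain k where k: "k \<in> {1..n}" "bval m v i (B n k) > 1"
    using assms(4) by (auto simp: N2_def)
  define t where "t = 2*n - k + 1"
  have kt: "1 \<le> k" "k < t" "t + k = 2*n + 1" using k by (auto simp: t_def)
  have "B n k = {k, t}" by (simp add: B_def t_def)
  then have big: "gval m v i k + gval m v i t > 1"
    using k(2) kt(2) by (simp add: bval_def)
  have third: "3 * gval m v i t > 1"
    using ONI_value_gt_third[OF assms(3,2) i k(1) big] large by simp
  obtain P where P: "(\<Union>b\<in>{1..n}. P b) = {1..m}"
      "\<forall>b\<in>{1..n}. \<forall>c\<in>{1..n}. b \<noteq> c \<longrightarrow> P b \<inter> P c = {}"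
      "\<forall>b\<in>{1..n}. bval m v i (P b) = 1"
    using assms(3) i unfolding ONI_def normalized_def by blast
  have antimono: "\<And>g h. 1 \<le> g \<Longrightarrow> g \<le> h \<Longrightarrow> gval m v i h \<le> gval m v i g"
    using gval_antimono[OF assms(2) _ i] assms(3) by (simp add: ONI_def)
  have fin: "\<forall>b\<in>{1..n}. finite (P b)"
    using P(1) by (metis UN_upper finite_atLeastAtMost finite_subset)
  have "card {1..t} + card {1..k} \<le> 2 * card {1..n}"
  proof (rule card_add_le_partition_bound[OF _ fin P(2)])
    fix b assume b: "b \<in> {1..n}"
    show "card (P b \<inter> {1..t}) + card (P b \<inter> {1..k}) \<le> 2"
      using bundle_card_le_two[OF gval_nonneg[OF assms(2) i] _ _ antimono kt(1) _ big third]
        fin P(3) b kt(2) by (simp add: bval_def)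
  qed (use P(1) kt assms(2) in \<open>auto simp: add_instance_def t_def\<close>)
  then show False using kt by simp
qed

end
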